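(* Suppose (A1) and (V4') hold. Then there are $\alpha^0>0$ and positive constants $b,\delta$ such that for every $\alpha\in(0,\alpha^0]$ and every initial condition $\Theta_0\in\mathbb{R}^d$, $\Phi_0\in\Omega$, the solution of the QSA ODE $\frac{d}{dt}\Theta_t=\alpha f(\Theta_t,\xi_t)$ satisfies $$\|\Theta_t\|\le b\|\Theta_0\|\exp(-\alpha\delta t)\qquad\text{for } t\le T_1,\quad T_1=\min\{t\ge0:\|\Theta_t\|\le\delta^{-1}\}.$$ Consequently the family of QSA ODE models is $\alpha^0$-ultimately bounded: there is $B<\infty$ such that for every $\alpha\in(0,\alpha^0]$ and every initial condition there is a finite $t_0$ with $\|\Theta_t\|\le B$ for all $t\ge t_0$.
   Context: Setting. Fix $d,m,K\ge1$, frequencies $\omega_i>0$, phases $\phi_i$; clock process $\Phi^i_t=\exp(2\pi j[\omega_it+\phi_i])$, $\Omega$ the closure of its orbit (compact, flow invariant; any point may be the initial condition), $\pi$ the uniform probability on $\Omega$. The probing signal is $\xi_t=G(\Phi_t)$ with $G(z)=G_0((z+1/z)/2)$, $G_0\colon\mathbb{R}^K\to\mathbb{R}^m$ analytic with absolutely summable Taylor coefficients. $f\colon\mathbb{R}^d\times\mathbb{R}^m\to\mathbb{R}^d$ is continuous, $\bar f(\theta)=\int_\Omega f(\theta,G(z))\pi(dz)$, and the mean flow is $\frac{d}{dt}\vartheta_t=\bar f(\vartheta_t)$. (A1): there is $L_f$ with $\|\bar f(\theta')-\bar f(\theta)\|\le L_f\|\theta'-\theta\|$ and $\|f(\theta',\xi)-f(\theta,\xi)\|+\|f(\theta,\xi')-f(\theta,\xi)\|\le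 L_f[\|\theta'-\theta\|+\|\xi'-\xi\|]$. (V4'): there are a function $V\colon\mathbb{R}^d\to\mathbb{R}_+$ and constants $L_V<\infty$, $\delta_0>0$, $\delta_1>0$, $T>0$ such that $|V(\theta')-V(\theta)|\le L_V\|\theta'-\theta\|$ for all $\theta,\theta'$, $V(\theta)\ge\|\theta\|$ whenever $\|\theta\|\ge\delta_0^{-1}$, and every solution of the mean flow satisfies $V(\vartheta_{\tau+T})-V(\vartheta_\tau)\le-\delta_1\|\vartheta_\tau\|$ for all $\tau\ge0$ with $\|\vartheta_\tau\|>\delta_1^{-1}$. *)

theory Defs
  imports "HOL-Analysis.Analysis" "HOL-Probability.Probability"
begin

definition mono_pow :: "('k::finite \<Rightarrow> nat) \<Rightarrow> real^'k \<Rightarrow> real" where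
  "mono_pow a x = (\<Prod>i\<in>UNIV. (x$i) ^ (a i))"

definition real_analytic_at :: "(real^'k::finite \<Rightarrow> 'b::real_normed_vector) \<Rightarrow> real^'k \<Rightarrow> bool" where
  "real_analytic_at g x0 \<longleftrightarrow>
     (\<exists>c r. r > 0 \<and> (\<forall>x. dist x x0 < r \<longrightarrow> ((\<lambda>a. mono_pow a (x - x0) *\<^sub>R c a) has_sum g x) UNIV))"

definition taylor_abs_summable :: "(real^'k::finite \<Rightarrow> 'b::real_normed_vector) \<Rightarrow> bool" where
  "taylor_abs_summable g \<longleftrightarrow>
     (\<exists>c r. r > 0 \<and> (\<forall>x. norm x < r \<longrightarrow> ((\<lambda>a. mono_pow a x *\<^sub>R c a) has_sum g x) UNIV)
            \<and> (\<lambda>a. norm (c a)) summable_on UNIV)"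

definition clock_from :: "real^'k::finite \<Rightarrow> complex^'k \<Rightarrow> real \<Rightarrow> complex^'k" where
  "clock_from \<omega> z0 t = (\<chi> i. z0$i * exp (2 * pi * \<i> * complex_of_real (\<omega>$i * t)))"

definition clock :: "real^'k::finite \<Rightarrow> real^'k \<Rightarrow> real \<Rightarrow> complex^'k" where
  "clock \<omega> \<phi> t = (\<chi> i. exp (2 * pi * \<i> * complex_of_real (\<omega>$i * t + \<phi>$i)))"

definition clock_Omega :: "real^'k::finite \<Rightarrow> real^'k \<Rightarrow> (complex^'k) set" where
  "clock_Omega \<omega> \<phi> = closure (range (clock \<omega> \<phi>))"

text \<open>The closed subgroup of the torus generated by the linear flow (Omega is a translate of it).\<close>
definition clock_group :: "real^'k::finite \<Rightarrow> (complex^'k) set" where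
  "clock_group \<omega> = closure (range (clock_from \<omega> (\<chi> i. 1)))"

text \<open>pi is the uniform (translated Haar) probability on Omega: a Borel probability
  concentrated on Omega and invariant under the translations of the group acting on Omega.\<close>
definition uniform_prob :: "real^'k::finite \<Rightarrow> real^'k \<Rightarrow> (complex^'k) measure \<Rightarrow> bool" where
  "uniform_prob \<omega> \<phi> \<pi> \<longleftrightarrow>
     prob_space \<pi> \<and> sets \<pi> = sets borel \<and> emeasure \<pi> (clock_Omega \<omega> \<phi>) = 1 \<and>
     (\<forall>h\<in>clock_group \<omega>. distr \<pi> borel (\<lambda>z. \<chi> i. h$i * z$i) = \<pi>)"

text \<open>Probing signal map G(z) = G0((z + 1/z)/2) (real part taken; it is real on the torus).\<close>
definition probe :: "(real^'k::finite \<Rightarrow> real^'m) \<Rightarrow> complex^'k \<Rightarrow> real^'m" where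
  "probe G0 z = G0 (\<chi> i. Re ((z$i + inverse (z$i)) / 2))"

definition mean_field ::
  "(complex^'k::finite) measure \<Rightarrow> (real^'k \<Rightarrow> real^'m) \<Rightarrow> (real^'d \<Rightarrow> real^'m \<Rightarrow> real^'d) \<Rightarrow> real^'d \<Rightarrow> real^'d" where
  "mean_field \<pi> G0 f \<theta> = (\<integral>z. f \<theta> (probe G0 z) \<partial>\<pi>)"

definition qsa_solution ::
  "real^'k::finite \<Rightarrow> (real^'k \<Rightarrow> real^'m) \<Rightarrow> (real^'d \<Rightarrow> real^'m \<Rightarrow> real^'d) \<Rightarrow> real
     \<Rightarrow> real^'d \<Rightarrow> complex^'k \<Rightarrow> (real \<Rightarrow> real^'d) \<Rightarrow> bool" where
  "qsa_solution \<omega> G0 f \<alpha> \<Theta>0 z0 \<Theta> \<longleftrightarrow>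
     \<Theta> 0 = \<Theta>0 \<and>
     (\<forall>t\<ge>0. (\<Theta> has_vector_derivative (\<alpha> *\<^sub>R f (\<Theta> t) (probe G0 (clock_from \<omega> z0 t)))) (at t within {0..}))"

definition mean_flow_solution :: "(real^'d \<Rightarrow> real^'d) \<Rightarrow> (real \<Rightarrow> real^'d) \<Rightarrow> bool" where
  "mean_flow_solution fbar \<theta>s \<longleftrightarrow>
     (\<forall>t\<ge>0. (\<theta>s has_vector_derivative fbar (\<theta>s t)) (at t within {0..}))"

end

(*
  The QSA vector field f(Theta, xi_t) differs from the mean field fbar(Theta) by a bounded amount
  C: the probing signal ranges over the compact image of the torus under the continuous map G,
  and f is Lipschitz in xi. By Gronwall's inequality, on a window of length T/alpha the solution
  therefore stays within a constant distance, independent of alpha, of the mean flow run at speed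
  alpha from the same point. Condition (V4') then makes V drop by delta1 |Theta| minus a constant
  over each window, which outside a large ball is a geometric contraction of V. Iterating gives
  exponential decay at a rate proportional to alpha until the ball is reached, and after a visit
  to the ball the solution can only move a bounded distance away before decaying again. No
  smallness of alpha is needed, so alpha0 = 1 works.
*)
theory Submission
  imports Defs
begin

section \<open>Global solutions of Lipschitz ODEs by Picard iteration\<close>

primrec picard_iterate :: "('a::banach \<Rightarrow> 'a) \<Rightarrow> 'a \<Rightarrow> nat \<Rightarrow> real \<Rightarrow> 'a" where
  "picard_iterate F x0 0 = (\<lambda>t. x0)"
| "picard_iterate F x0 (Suc n) = (\<lambda>t. x0 + integral {0..t} (\<lambda>s. F (picard_iterate F x0 n s)))"

definition picard_limit :: "('a::banach \<Rightarrow> 'a) \<Rightarrow> 'a \<Rightarrow> real \<Rightarrow> 'a" where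
  "picard_limit F x0 t = x0 + (\<Sum>n. picard_iterate F x0 (Suc n) t - picard_iterate F x0 n t)"

lemma continuous_on_picard_iterate:
  assumes "continuous_on UNIV F"
  shows "continuous_on {0..b} (picard_iterate F x0 n)"
proof (induction n arbitrary: b)
  case 0
  then show ?case by simp
next
  case (Suc n)
  have "continuous_on {0..b} (\<lambda>s. F (picard_iterate F x0 n s))"
    using continuous_on_compose2[OF assms Suc.IH] by simp
  then have "continuous_on {0..b} (\<lambda>t. integral {0..t} (\<lambda>s. F (picard_iterate F x0 n s)))"
    by (intro indefinite_integral_continuous_1 integrable_continuous_real)
  then show ?case by (simp add: continuous_on_add)
qed

lemma continuous_on_picard_field:
  assumes "continuous_on UNIV F"
  shows "continuous_on {0..b} (\<lambda>s. F (picard_iterate F x0 n s))"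
  using continuous_on_compose2[OF assms continuous_on_picard_iterate[OF assms]] by simp

lemma has_integral_monomial:
  fixes t :: real
  assumes "t \<ge> 0"
  shows "((\<lambda>s. c * s ^ k) has_integral (c * t ^ Suc k / Suc k)) {0..t}"
proof -
  have "((\<lambda>s. c * s ^ Suc k / Suc k) has_real_derivative c * (Suc k * s ^ k) / Suc k) (at s within {0..t})" for s :: real
    by (intro derivative_eq_intros) auto
  then have "((\<lambda>s. c * s ^ Suc k / Suc k) has_vector_derivative c * s ^ k) (at s within {0..t})" for s :: real
    by (simp add: has_real_derivative_iff_has_vector_derivative[symmetric])
  from fundamental_theorem_of_calculus[OF assms this] show ?thesis by simp
qed

lemma picard_iterate_step_bound:
  assumes F: "L-lipschitz_on UNIV F" and t: "t \<ge> 0"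
  shows "norm (picard_iterate F x0 (Suc n) t - picard_iterate F x0 n t)
           \<le> norm (F x0) * L ^ n * t ^ Suc n / fact (Suc n)"
  using t
proof (induction n arbitrary: t)
  case 0
  then show ?case by simp
next
  case (Suc n)
  let ?P = "picard_iterate F x0" and ?c = "L * norm (F x0) * L ^ n / fact (Suc n)"
  have cF: "continuous_on UNIV F" and L: "L \<ge> 0"
    using F by (auto intro: lipschitz_on_continuous_on lipschitz_on_nonneg)
  have int: "(\<lambda>s. F (?P m s)) integrable_on {0..t}" for m
    by (intro integrable_continuous_real continuous_on_picard_field[OF cF])
  have mono: "((\<lambda>s. ?c * s ^ Suc n) has_integral (?c * t ^ Suc (Suc n) / Suc (Suc n))) {0..t}"
    using Suc.prems by (rule has_integral_monomial)
  have "?P (Suc (Suc n)) t - ?P (Suc n) t = integral {0..t} (\<lambda>s. F (?P (Suc n) s) - F (?P n s))"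
    using int[of "Suc n"] int[of n] by (simp add: integral_diff)
  also have "norm \<dots> \<le> integral {0..t} (\<lambda>s. ?c * s ^ Suc n)"
  proof (rule integral_norm_bound_integral)
    fix s assume s: "s \<in> {0..t}"
    have "norm (F (?P (Suc n) s) - F (?P n s)) \<le> L * norm (?P (Suc n) s - ?P n s)"
      using F by (simp add: lipschitz_on_normD)
    also have "\<dots> \<le> L * (norm (F x0) * L ^ n * s ^ Suc n / fact (Suc n))"
      using Suc.IH[of s] s L by (intro mult_left_mono) auto
    finally show "norm (F (?P (Suc n) s) - F (?P n s)) \<le> ?c * s ^ Suc n"
      by simp
  qed (rule integrable_diff[OF int int], rule has_integral_integrable[OF mono])
  also have "\<dots> = ?c * t ^ Suc (Suc n) / Suc (Suc n)"
    using mono by (rule integral_unique)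
  also have "\<dots> = norm (F x0) * L ^ Suc n * t ^ Suc (Suc n) / fact (Suc (Suc n))"
    by (simp add: field_simps)
  finally show ?case .
qed

lemma picard_iterate_uniform_limit:
  assumes F: "L-lipschitz_on UNIV F"
  shows "uniform_limit {0..b} (picard_iterate F x0) (picard_limit F x0) sequentially"
proof -
  let ?P = "picard_iterate F x0"
  have L: "L \<ge> 0" using F by (rule lipschitz_on_nonneg)
  define M where "M n = norm (F x0) * b * (inverse (fact n) * (L * b) ^ n)" for n
  have bound: "norm (?P (Suc n) t - ?P n t) \<le> M n" if t: "t \<in> {0..b}" for n t
  proof -
    have "norm (?P (Suc n) t - ?P n t) \<le> norm (F x0) * L ^ n * t ^ Suc n / fact (Suc n)"
      using picard_iterate_step_bound[OF F] t by simp
    also have "\<dots> \<le> norm (F x0) * L ^ n * b ^ Suc n / fact n"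
      using t L by (intro frac_le mult_left_mono power_mono fact_mono) auto
    also have "\<dots> = M n" by (simp add: M_def power_mult_distrib field_simps)
    finally show ?thesis .
  qed
  have "summable M" unfolding M_def by (intro summable_mult summable_exp)
  then have "uniform_limit {0..b} (\<lambda>n t. x0 + (\<Sum>i<n. ?P (Suc i) t - ?P i t)) (picard_limit F x0) sequentially"
    unfolding picard_limit_def by (intro uniform_limit_add uniform_limit_const Weierstrass_m_test[OF bound])
  moreover have "(\<lambda>n t. x0 + (\<Sum>i<n. ?P (Suc i) t - ?P i t)) = ?P"
  proof (intro ext)
    fix n t
    show "x0 + (\<Sum>i<n. ?P (Suc i) t - ?P i t) = ?P n t"
      using sum_lessThan_telescope[of "\<lambda>i. ?P i t" n] by (simp del: picard_iterate.simps(2))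
  qed
  ultimately show ?thesis by simp
qed

lemma picard_limit_integral_equation:
  assumes F: "L-lipschitz_on UNIV F" and t: "t \<ge> 0"
  shows "picard_limit F x0 t = x0 + integral {0..t} (\<lambda>s. F (picard_limit F x0 s))"
proof -
  let ?P = "picard_iterate F x0" and ?y = "picard_limit F x0"
  have cF: "continuous_on UNIV F" using F by (rule lipschitz_on_continuous_on)
  have lim: "uniform_limit {0..t} ?P ?y sequentially"
    by (rule picard_iterate_uniform_limit[OF F])
  have "uniform_limit {0..t} (\<lambda>n s. F (?P n s)) (\<lambda>s. F (?y s)) sequentially"
    using lipschitz_on_uniformly_continuous[OF F]
    by (intro uniform_limit_compose_uniformly_continuous_on[OF lim]) auto
  then obtain I J where I: "\<And>n. ((\<lambda>s. F (?P n s)) has_integral I n) {0..t}"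
    and J: "((\<lambda>s. F (?y s)) has_integral J) {0..t}" and IJ: "I \<longlonglongrightarrow> J"
    by (rule uniform_limit_integral) (auto intro: continuous_on_picard_field[OF cF])
  have "?P (Suc n) t = x0 + I n" for n
    using I by (simp add: integral_unique)
  then have "(\<lambda>n. ?P (Suc n) t) \<longlonglongrightarrow> x0 + J"
    using tendsto_add[OF tendsto_const IJ] by simp
  moreover have "(\<lambda>n. ?P n t) \<longlonglongrightarrow> ?y t"
    using tendsto_uniform_limitI[OF lim, of t] t by simp
  then have "(\<lambda>n. ?P (Suc n) t) \<longlonglongrightarrow> ?y t"
    by (rule LIMSEQ_Suc)
  ultimately show ?thesis
    using J LIMSEQ_unique by (metis integral_unique)
qed

lemma picard_iterate_at_0: "picard_iterate F x0 n 0 = x0"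
  by (cases n) simp_all

lemma picard_limit_at_0: "picard_limit F x0 0 = x0"
  by (simp add: picard_limit_def picard_iterate_at_0 del: picard_iterate.simps)

lemma has_vector_derivative_picard_limit:
  assumes F: "L-lipschitz_on UNIV F" and t: "t \<ge> 0"
  shows "(picard_limit F x0 has_vector_derivative F (picard_limit F x0 t)) (at t within {0..})"
proof -
  let ?y = "picard_limit F x0"
  have cF: "continuous_on UNIV F" using F by (rule lipschitz_on_continuous_on)
  have "continuous_on {0..t+1} ?y"
    by (rule uniform_limit_theorem[OF _ picard_iterate_uniform_limit[OF F]])
      (auto intro: always_eventually continuous_on_picard_iterate[OF cF])
  then have "continuous_on {0..t+1} (\<lambda>s. F (?y s))"
    using continuous_on_compose2[OF cF] by blast
  then have "((\<lambda>u. integral {0..u} (\<lambda>s. F (?y s))) has_vector_derivative F (?y t))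
      (at t within {0..t+1})"
    using t by (intro integral_has_vector_derivative) auto
  then have "((\<lambda>u. x0 + integral {0..u} (\<lambda>s. F (?y s))) has_vector_derivative F (?y t))
      (at t within {0..t+1})"
    using has_vector_derivative_add[OF has_vector_derivative_const] by fastforce
  then have "(?y has_vector_derivative F (?y t)) (at t within {0..t+1})"
    by (rule has_vector_derivative_transform_within[OF _ zero_less_one])
      (use t in \<open>auto simp: picard_limit_integral_equation[OF F]\<close>)
  moreover have "at t within {0..t+1} = at t within {0..}"
    by (rule at_within_nhd[of _ "{..<t+1}"]) auto
  ultimately show ?thesis by simp
qed

lemma has_vector_derivative_picard_limit_rescaled:
  assumes F: "L-lipschitz_on UNIV F" and "\<alpha> > 0" and "t \<ge> 0"
  shows "((\<lambda>t. picard_limit F x0 (\<alpha> * t)) has_vector_derivative \<alpha> *\<^sub>R F (picard_limit F x0 (\<alpha> * t)))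
    (at t within {0..})"
proof -
  have "(*) \<alpha> ` {0..} \<subseteq> {0..}" and "\<alpha> * t \<ge> 0"
    using assms by auto
  then have "(picard_limit F x0 has_vector_derivative F (picard_limit F x0 (\<alpha> * t)))
      (at (\<alpha> * t) within (*) \<alpha> ` {0..})"
    using has_vector_derivative_picard_limit[OF F] has_vector_derivative_within_subset by blast
  moreover have "((*) \<alpha> has_vector_derivative \<alpha>) (at t within {0..})"
    by (auto intro!: derivative_eq_intros simp: has_real_derivative_iff_has_vector_derivative[symmetric])
  ultimately show ?thesis
    using vector_diff_chain_within by (fastforce simp: o_def)
qed

section \<open>Comparison with a linear differential inequality\<close>

lemma norm_ge_left_of_touching:
  fixes e :: "real \<Rightarrow> 'a::real_normed_vector"
  assumes de: "(e has_vector_derivative e') (at t within U)"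
    and dg: "(g has_real_derivative g') (at t within U)"
    and slower: "norm e' < g'" and touch: "norm (e t) = g t"
  shows "\<exists>d>0. \<forall>s\<in>U. t - d < s \<and> s \<le> t \<longrightarrow> g s \<le> norm (e s)"
proof -
  define \<eta> where "\<eta> = (g' - norm e') / 2"
  have \<eta>: "\<eta> > 0" using slower by (simp add: \<eta>_def)
  have "\<forall>\<epsilon>>0. \<exists>d>0. \<forall>s\<in>U. norm (s - t) < d \<longrightarrow>
      norm (e s - e t - (s - t) *\<^sub>R e') \<le> \<epsilon> * norm (s - t)"
    using de by (simp add: has_vector_derivative_def has_derivative_within_alt)
  then obtain d1 where d1: "d1 > 0" "\<forall>s\<in>U. norm (s - t) < d1 \<longrightarrow>
      norm (e s - e t - (s - t) *\<^sub>R e') \<le> \<eta> * norm (s - t)"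
    using \<eta> by blast
  have "\<forall>\<epsilon>>0. \<exists>d>0. \<forall>s\<in>U. norm (s - t) < d \<longrightarrow>
      norm (g s - g t - (s - t) * g') \<le> \<epsilon> * norm (s - t)"
    using dg by (simp add: has_field_derivative_def has_derivative_within_alt mult.commute)
  then obtain d2 where d2: "d2 > 0" "\<forall>s\<in>U. norm (s - t) < d2 \<longrightarrow>
      norm (g s - g t - (s - t) * g') \<le> \<eta> * norm (s - t)"
    using \<eta> by blast
  have "g s \<le> norm (e s)" if s: "s \<in> U" "t - min d1 d2 < s" "s \<le> t" for s
  proof -
    have e_close: "norm (e s - e t - (s - t) *\<^sub>R e') \<le> \<eta> * (t - s)"
      and g_close: "\<bar>g s - g t - (s - t) * g'\<bar> \<le> \<eta> * (t - s)"
      using s d1 d2 by auto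
    have "e t = e s - (s - t) *\<^sub>R e' - (e s - e t - (s - t) *\<^sub>R e')"
      by simp
    then have "norm (e t) \<le> norm (e s) + norm ((s - t) *\<^sub>R e') + norm (e s - e t - (s - t) *\<^sub>R e')"
      by (metis order_trans[OF norm_triangle_ineq4 add_right_mono[OF norm_triangle_ineq4]])
    also have "\<dots> \<le> norm (e s) + (t - s) * norm e' + \<eta> * (t - s)"
      using e_close s(3) by simp
    finally have "norm (e t) \<le> norm (e s) + (t - s) * norm e' + \<eta> * (t - s)" .
    moreover have "g s \<le> g t - (t - s) * g' + \<eta> * (t - s)"
      using g_close by (simp add: abs_le_iff algebra_simps)
    moreover have "(t - s) * norm e' + 2 * (\<eta> * (t - s)) = (t - s) * g'"
      by (simp add: \<eta>_def field_simps)
    ultimately show ?thesis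
      using touch by linarith
  qed
  moreover have "min d1 d2 > 0" using d1 d2 by simp
  ultimately show ?thesis by blast
qed

lemma first_crossing:
  fixes h :: "real \<Rightarrow> real"
  assumes cont: "continuous_on {0..S} h" and "h 0 < 0" and "x \<in> {0..S}" and "h x \<ge> 0"
  obtains t where "t \<in> {0<..S}" "h t = 0" "\<And>s. 0 \<le> s \<Longrightarrow> s < t \<Longrightarrow> h s < 0"
proof -
  define A where "A = {s \<in> {0..S}. 0 \<le> h s}"
  have "closed A"
    unfolding A_def using cont by (intro continuous_on_closed_Collect_le continuous_intros) auto
  moreover have "A \<noteq> {}" "bdd_below A"
    using assms(3,4) by (auto simp: A_def bdd_below_def)
  ultimately have tA: "Inf A \<in> A" (is "?t \<in> A")
    by (rule closed_contains_Inf[rotated 2])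
  have before: "h s < 0" if "0 \<le> s" "s < ?t" for s
    using that tA cInf_lower[OF _ \<open>bdd_below A\<close>, of s] by (force simp: A_def)
  have "continuous_on {0..?t} h"
    using tA by (auto simp: A_def intro: continuous_on_subset[OF cont])
  then obtain s where s: "0 \<le> s" "s \<le> ?t" "h s = 0"
    using IVT'[of h 0 0 ?t] \<open>h 0 < 0\<close> tA by (auto simp: A_def)
  then have "s = ?t"
    using before[of s] by fastforce
  show ?thesis
  proof (rule that)
    show "?t \<in> {0<..S}"
      using tA \<open>h 0 < 0\<close> by (cases "?t = 0") (auto simp: A_def)
    show "h ?t = 0"
      using s \<open>s = ?t\<close> by simp
  qed (rule before)
qed

lemma last_visit:
  fixes h :: "real \<Rightarrow> real"
  assumes "continuous_on {0..t} h" and "h 0 \<le> R" and "t \<ge> 0"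
  obtains s where "s \<in> {0..t}" "h s \<le> R" "\<And>u. s < u \<Longrightarrow> u \<le> t \<Longrightarrow> h u > R"
proof -
  define S where "S = {u \<in> {0..t}. h u \<le> R}"
  have "closed S"
    unfolding S_def using assms(1) by (intro continuous_on_closed_Collect_le continuous_intros) auto
  moreover have "S \<noteq> {}" "bdd_above S"
    using assms(2,3) by (auto simp: S_def bdd_above_def)
  ultimately have "Sup S \<in> S"
    by (rule closed_contains_Sup[rotated 2])
  moreover have "h u > R" if "Sup S < u" "u \<le> t" for u
    using that cSup_upper[OF _ \<open>bdd_above S\<close>, of u] \<open>Sup S \<in> S\<close> by (force simp: S_def)
  ultimately show ?thesis
    using that by (auto simp: S_def)
qed

lemma norm_less_by_comparison:
  fixes e :: "real \<Rightarrow> 'a::real_normed_vector"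
  assumes de: "\<And>s. s \<in> {0..S} \<Longrightarrow> (e has_vector_derivative e' s) (at s within {0..S})"
    and dg: "\<And>s. s \<in> {0..S} \<Longrightarrow> (g has_real_derivative g' s) (at s within {0..S})"
    and init: "norm (e 0) < g 0"
    and slower: "\<And>s. s \<in> {0..S} \<Longrightarrow> norm (e s) = g s \<Longrightarrow> norm (e' s) < g' s"
    and x: "x \<in> {0..S}"
  shows "norm (e x) < g x"
proof (rule ccontr)
  assume "\<not> norm (e x) < g x"
  have "continuous_on {0..S} e"
    using de by (meson continuous_on_eq_continuous_within has_vector_derivative_continuous)
  moreover have "continuous_on {0..S} g"
    using dg by (meson continuous_on_eq_continuous_within DERIV_continuous)
  ultimately have "continuous_on {0..S} (\<lambda>s. norm (e s) - g s)"
    by (intro continuous_intros)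
  then obtain t where t: "t \<in> {0<..S}" "norm (e t) = g t"
    and before: "\<And>s. 0 \<le> s \<Longrightarrow> s < t \<Longrightarrow> norm (e s) < g s"
    using first_crossing[of S "\<lambda>s. norm (e s) - g s" x] init x \<open>\<not> norm (e x) < g x\<close> by auto
  then have tS: "t \<in> {0..S}" by simp
  obtain d where d: "d > 0" "\<forall>s\<in>{0..S}. t - d < s \<and> s \<le> t \<longrightarrow> g s \<le> norm (e s)"
    using norm_ge_left_of_touching[OF de[OF tS] dg[OF tS] slower[OF tS t(2)] t(2)] by blast
  define s where "s = t - min d t / 2"
  have "s \<in> {0..S}" "t - d < s" "s < t"
    using d(1) t(1) by (auto simp: s_def)
  then show False
    using d(2) before[of s] by force
qed

lemma norm_le_exp_of_linear_growth:
  fixes e :: "real \<Rightarrow> 'a::real_normed_vector"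
  assumes de: "\<And>s. s \<in> {0..S} \<Longrightarrow> (e has_vector_derivative e' s) (at s within {0..S})"
    and a: "a > 0" and L: "L > 0" and B: "B \<ge> 0"
    and growth: "\<And>s. s \<in> {0..S} \<Longrightarrow> norm (e' s) \<le> a * (B + L * norm (e s))"
    and s: "s \<in> {0..S}"
  shows "norm (e s) \<le> (norm (e 0) + 1 + (B + 1) / L) * exp (a * L * s)"
proof -
  define K where "K = norm (e 0) + 1 + (B + 1) / L"
  \<comment> \<open>\<open>g\<close> solves \<open>g' = a (L g + B + 1)\<close>; the extra 1 makes the comparison strict.\<close>
  define g where "g s = K * exp (a * L * s) - (B + 1) / L" for s
  have dg: "(g has_real_derivative a * L * g s + a * (B + 1)) (at s within {0..S})" for s
    unfolding g_def using L by (auto intro!: derivative_eq_intros simp: field_simps)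
  have "norm (e s) < g s"
  proof (rule norm_less_by_comparison[OF de dg _ _ s])
    show "norm (e 0) < g 0" by (simp add: g_def K_def)
    fix s assume "s \<in> {0..S}" "norm (e s) = g s"
    then show "norm (e' s) < a * L * g s + a * (B + 1)"
      using growth[of s] a by (simp add: algebra_simps)
  qed
  moreover have "(B + 1) / L \<ge> 0" using B L by simp
  ultimately show ?thesis by (simp add: g_def K_def)
qed

section \<open>Real-analytic maps are continuous\<close>

lemma abs_mono_pow_le:
  fixes x :: "real^'k::finite"
  assumes "norm x \<le> s"
  shows "\<bar>mono_pow a x\<bar> \<le> s ^ (\<Sum>i\<in>UNIV. a i)"
proof -
  have "\<bar>mono_pow a x\<bar> = (\<Prod>i\<in>UNIV. \<bar>x$i\<bar> ^ a i)"
    by (simp add: mono_pow_def abs_prod power_abs)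
  also have "\<dots> \<le> (\<Prod>i\<in>UNIV. s ^ a i)"
    using order_trans[OF component_le_norm_cart assms] by (intro prod_mono) (simp add: power_mono)
  also have "\<dots> = s ^ (\<Sum>i\<in>UNIV. a i)"
    by (simp add: power_sum)
  finally show ?thesis .
qed

lemma mono_pow_const: "mono_pow a (\<chi> i. c) = c ^ (\<Sum>i\<in>UNIV. a i)"
  by (simp add: mono_pow_def power_sum)

lemma mono_pow_zero: "mono_pow a (0::real^'k::finite) = (if (\<Sum>i\<in>UNIV. a i) = 0 then 1 else 0)"
proof (cases "(\<Sum>i\<in>UNIV. a i) = 0")
  case False
  then obtain j where "a j \<noteq> 0"
    by (metis sum.neutral)
  then show ?thesis
    using False by (auto simp: mono_pow_def intro!: prod_zero)
qed (simp add: mono_pow_def)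

lemma abs_mono_pow_diff_le:
  fixes y :: "real^'k::finite"
  assumes s: "norm y \<le> s" "s \<le> \<rho>" and "\<rho> > 0"
  shows "\<bar>mono_pow a y - mono_pow a 0\<bar> \<le> s / \<rho> * \<rho> ^ (\<Sum>i\<in>UNIV. a i)"
proof (cases "(\<Sum>i\<in>UNIV. a i) = 0")
  case True
  have "0 \<le> s" using s(1) norm_ge_zero order_trans by blast
  then show ?thesis using True \<open>\<rho> > 0\<close> by (simp add: mono_pow_zero mono_pow_def)
next
  case False
  then obtain m where m: "(\<Sum>i\<in>UNIV. a i) = Suc m"
    using not0_implies_Suc by blast
  have "\<bar>mono_pow a y\<bar> \<le> s * s ^ m"
    using abs_mono_pow_le[OF s(1), of a] m by simp
  also have "\<dots> \<le> s * \<rho> ^ m"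
    using s norm_ge_zero[of y] by (intro mult_left_mono power_mono) linarith+
  also have "\<dots> = s / \<rho> * \<rho> ^ Suc m"
    using \<open>\<rho> > 0\<close> by simp
  finally show ?thesis
    using False m by (simp add: mono_pow_zero)
qed

lemma summable_on_sum:
  fixes f :: "'i \<Rightarrow> 'a \<Rightarrow> real"
  assumes "finite I" "\<And>i. i \<in> I \<Longrightarrow> f i summable_on A"
  shows "(\<lambda>x. \<Sum>i\<in>I. f i x) summable_on A"
  using assms by (induction I rule: finite_induct) (auto intro: summable_on_add)

lemma summable_on_imp_norm_summable_on_vec:
  fixes v :: "'a \<Rightarrow> real^'m::finite"
  assumes "v summable_on A"
  shows "(\<lambda>a. norm (v a)) summable_on A"
proof -
  have "(\<lambda>a. \<bar>v a $ j\<bar>) summable_on A" for j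
    using summable_on_bounded_linear[OF bounded_linear_vec_nth assms, of j]
    by (simp add: summable_on_iff_abs_summable_on_real[where f = "\<lambda>a. v a $ j"])
  then have "(\<lambda>a. \<Sum>j\<in>UNIV. \<bar>v a $ j\<bar>) summable_on A"
    by (intro summable_on_sum) auto
  then show ?thesis
    by (rule summable_on_comparison_test) (simp_all add: norm_le_l1_cart)
qed

lemma power_series_increment_le:
  fixes c :: "('k::finite \<Rightarrow> nat) \<Rightarrow> 'b::real_normed_vector"
  assumes hx: "((\<lambda>a. mono_pow a (x - x0) *\<^sub>R c a) has_sum g x) UNIV"
    and h0: "((\<lambda>a. mono_pow a 0 *\<^sub>R c a) has_sum g x0) UNIV"
    and K: "(\<lambda>a. \<rho> ^ (\<Sum>i\<in>UNIV. a i) * norm (c a)) summable_on UNIV"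
    and s: "norm (x - x0) \<le> s" "s \<le> \<rho>" and \<rho>: "\<rho> > 0"
  shows "norm (g x - g x0) \<le> s / \<rho> * (\<Sum>\<^sub>\<infinity>a. \<rho> ^ (\<Sum>i\<in>UNIV. a i) * norm (c a))"
proof -
  let ?K = "\<lambda>a. \<rho> ^ (\<Sum>i\<in>UNIV. a i) * norm (c a)"
  let ?d = "\<lambda>a. (mono_pow a (x - x0) - mono_pow a 0) *\<^sub>R c a"
  have "((\<lambda>a. - (mono_pow a 0 *\<^sub>R c a)) has_sum (- g x0)) UNIV"
    using h0 by (simp add: has_sum_uminus)
  from has_sum_add[OF hx this] have "(?d has_sum (g x - g x0)) UNIV"
    by (simp add: scaleR_diff_left)
  have bound: "norm (?d a) \<le> s / \<rho> * ?K a" for a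
    using mult_right_mono[OF abs_mono_pow_diff_le[OF s \<rho>, of a] norm_ge_zero[of "c a"]]
    by (simp add: mult.assoc)
  have summable_K: "(\<lambda>a. s / \<rho> * ?K a) summable_on UNIV"
    using K by (rule summable_on_cmult_right)
  then have summable_d: "(\<lambda>a. norm (?d a)) summable_on UNIV"
    by (rule summable_on_comparison_test) (use bound in auto)
  then have "norm (g x - g x0) \<le> (\<Sum>\<^sub>\<infinity>a. norm (?d a))"
    using norm_infsum_bound[of ?d UNIV] infsumI[OF \<open>(?d has_sum (g x - g x0)) UNIV\<close>] by simp
  also have "\<dots> \<le> (\<Sum>\<^sub>\<infinity>a. s / \<rho> * ?K a)"
    by (rule infsum_mono[OF summable_d summable_K bound])
  also have "\<dots> = s / \<rho> * (\<Sum>\<^sub>\<infinity>a. ?K a)"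
    by (rule infsum_cmult_right) (use K in auto)
  finally show ?thesis .
qed

lemma isCont_if_dist_le:
  assumes "\<rho> > 0" and "\<And>x. dist x x0 \<le> \<rho> \<Longrightarrow> dist (g x) (g x0) \<le> M * dist x x0"
  shows "isCont g x0"
proof -
  have "\<forall>\<^sub>F x in at x0. norm (dist (g x) (g x0)) \<le> M * dist x x0"
    using assms unfolding eventually_at by (intro exI[of _ \<rho>]) auto
  moreover have "((\<lambda>x. M * dist x x0) \<longlongrightarrow> M * dist x0 x0) (at x0)"
    by (intro tendsto_intros)
  then have "((\<lambda>x. M * dist x x0) \<longlongrightarrow> 0) (at x0)"
    by simp
  ultimately have "((\<lambda>x. dist (g x) (g x0)) \<longlongrightarrow> 0) (at x0)"
    by (rule Lim_null_comparison)
  then show ?thesis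
    unfolding isCont_def by (rule tendsto_dist_iff[THEN iffD2])
qed

lemma real_analytic_at_imp_isCont:
  fixes g :: "real^'k::finite \<Rightarrow> real^'m::finite"
  assumes "real_analytic_at g x0"
  shows "isCont g x0"
proof -
  obtain c r where r: "r > 0"
    and hs: "\<And>x. dist x x0 < r \<Longrightarrow> ((\<lambda>a. mono_pow a (x - x0) *\<^sub>R c a) has_sum g x) UNIV"
    using assms unfolding real_analytic_at_def by blast
  define \<rho> where "\<rho> = r / (2 * CARD('k))"
  have \<rho>: "\<rho> > 0" using r by (simp add: \<rho>_def)
  have "norm (\<chi> i::'k. \<rho>) \<le> CARD('k) * \<rho>"
    using norm_le_l1_cart[of "\<chi> i::'k. \<rho>"] \<rho> by simp
  also have r_bound: "\<dots> < r" using r by (simp add: \<rho>_def)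
  finally have "((\<lambda>a. \<rho> ^ (\<Sum>i\<in>UNIV. a i) *\<^sub>R c a) has_sum g (x0 + (\<chi> i. \<rho>))) UNIV"
    using hs[of "x0 + (\<chi> i. \<rho>)"] by (simp add: dist_norm mono_pow_const)
  then have "(\<lambda>a. norm (\<rho> ^ (\<Sum>i\<in>UNIV. a i) *\<^sub>R c a)) summable_on UNIV"
    by (intro summable_on_imp_norm_summable_on_vec has_sum_imp_summable)
  then have K: "(\<lambda>a. \<rho> ^ (\<Sum>i\<in>UNIV. a i) * norm (c a)) summable_on UNIV"
    using \<rho> by simp
  define M where "M = (\<Sum>\<^sub>\<infinity>a. \<rho> ^ (\<Sum>i\<in>UNIV. a i) * norm (c a)) / \<rho>"
  have local_lipschitz: "dist (g x) (g x0) \<le> M * dist x x0" if "dist x x0 \<le> \<rho>" for x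
  proof -
    have "\<rho> \<le> CARD('k) * \<rho>" using \<rho> by (simp add: Suc_leI)
    then have hx: "((\<lambda>a. mono_pow a (x - x0) *\<^sub>R c a) has_sum g x) UNIV"
      using that r_bound by (intro hs) linarith
    have h0: "((\<lambda>a. mono_pow a 0 *\<^sub>R c a) has_sum g x0) UNIV"
      using hs[of x0] r by simp
    have "norm (x - x0) \<le> \<rho>"
      using that by (simp add: dist_norm)
    from power_series_increment_le[OF hx h0 K order_refl this \<rho>] show ?thesis
      by (simp add: dist_norm M_def mult.commute)
  qed
  show ?thesis
    using \<rho> local_lipschitz by (rule isCont_if_dist_le)
qed

section \<open>The probing signal and the mean vector field\<close>

lemma norm_clock_from_nth:
  assumes "\<forall>i. norm (z0$i) = 1"
  shows "norm (clock_from \<omega> z0 t $ i) = 1"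
  using assms by (simp add: clock_from_def norm_mult norm_exp_eq_Re)

lemma clock_Omega_subset_torus:
  assumes "z \<in> clock_Omega \<omega> \<phi>"
  shows "\<forall>i. norm (z$i) = 1"
proof -
  have "closed {z::complex^'k. \<forall>i. norm (z$i) = 1}"
    unfolding Collect_all_eq by (intro closed_INT ballI closed_Collect_eq continuous_intros)
  moreover have "range (clock \<omega> \<phi>) \<subseteq> {z. \<forall>i. norm (z$i) = 1}"
    by (auto simp: clock_def norm_exp_eq_Re)
  ultimately show ?thesis
    using assms closure_minimal unfolding clock_Omega_def by blast
qed

lemma probe_bounded_on_torus:
  fixes G0 :: "real^'k::finite \<Rightarrow> real^'m::finite"
  assumes "\<And>x. isCont G0 x"
  obtains M where "M \<ge> 0" "\<And>z. \<forall>i. norm (z$i) = 1 \<Longrightarrow> norm (probe G0 z) \<le> M"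
proof -
  let ?X = "cbox (\<chi> i. -1) (\<chi> i. (1::real)) :: (real^'k) set"
  have "compact (G0 ` ?X)"
    using assms by (intro compact_continuous_image continuous_at_imp_continuous_on ballI compact_cbox)
  then obtain M where "\<forall>y\<in>G0 ` ?X. norm y \<le> M"
    using compact_imp_bounded bounded_iff by metis
  then have M: "\<And>x. x \<in> ?X \<Longrightarrow> norm (G0 x) \<le> M"
    by blast
  have arg: "(\<chi> i. Re ((z$i + inverse (z$i)) / 2)) \<in> ?X" if "\<forall>i. norm (z$i) = 1" for z :: "complex^'k"
  proof -
    have "\<bar>Re ((z$i + inverse (z$i)) / 2)\<bar> \<le> 1" for i
    proof -
      have "\<bar>Re ((z$i + inverse (z$i)) / 2)\<bar> \<le> (norm (z$i) + norm (inverse (z$i))) / 2"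
        using abs_Re_le_cmod[of "(z$i + inverse (z$i)) / 2"] norm_triangle_ineq[of "z$i" "inverse (z$i)"]
        by (simp add: norm_divide)
      then show ?thesis using that by (simp add: norm_inverse)
    qed
    then have "\<forall>i. - 1 \<le> Re ((z$i + inverse (z$i)) / 2) \<and> Re ((z$i + inverse (z$i)) / 2) \<le> 1"
      by (meson abs_le_iff minus_le_iff)
    then show ?thesis unfolding mem_box_cart by simp
  qed
  show ?thesis
  proof (rule that[of "max M 0"])
    fix z :: "complex^'k"
    assume "\<forall>i. norm (z$i) = 1"
    then have "norm (probe G0 z) \<le> M"
      unfolding probe_def by (intro M arg)
    then show "norm (probe G0 z) \<le> max M 0" by simp
  qed simp
qed

lemma probe_measurable:
  fixes G0 :: "real^'k::finite \<Rightarrow> real^'m::finite"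
  assumes "\<And>x. isCont G0 x"
  shows "probe G0 \<in> borel_measurable borel"
proof -
  define P :: "complex^'k \<Rightarrow> real^'k" where "P z = (\<chi> i. Re ((z$i + inverse (z$i)) / 2))" for z
  have "P \<in> borel_measurable borel"
  proof (subst borel_measurable_euclidean_space, intro ballI)
    fix b :: "real^'k" assume "b \<in> Basis"
    then obtain j u where b: "b = axis j u" "u \<in> (Basis :: real set)"
      unfolding Basis_vec_def by blast
    have "(\<lambda>z::complex^'k. z $ j) \<in> borel_measurable borel"
      by (intro borel_measurable_continuous_onI continuous_intros)
    then have "(\<lambda>z::complex^'k. Re ((z$j + inverse (z$j)) / 2) * u) \<in> borel_measurable borel"
      by measurable
    then show "(\<lambda>z. P z \<bullet> b) \<in> borel_measurable borel"
      using b by (simp add: P_def inner_axis)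
  qed
  moreover have "G0 \<in> borel_measurable borel"
    using assms by (intro borel_measurable_continuous_onI continuous_at_imp_continuous_on) auto
  ultimately have "(\<lambda>z. G0 (P z)) \<in> borel_measurable borel"
    by measurable
  then show ?thesis by (simp add: probe_def[abs_def] P_def)
qed

lemma norm_diff_mean_field_le:
  fixes G0 :: "real^'k::finite \<Rightarrow> real^'m::finite" and f :: "real^'d::finite \<Rightarrow> real^'m \<Rightarrow> real^'d"
  assumes "prob_space \<pi>" and sets: "sets \<pi> = sets borel"
    and meas: "probe G0 \<in> borel_measurable borel"
    and bounded: "AE z in \<pi>. norm (probe G0 z) \<le> M"
    and f_lip: "\<And>\<xi> \<xi>'. norm (f \<theta> \<xi>' - f \<theta> \<xi>) \<le> L * norm (\<xi>' - \<xi>)" and "L \<ge> 0"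
    and \<xi>: "norm \<xi> \<le> M"
  shows "norm (f \<theta> \<xi> - mean_field \<pi> G0 f \<theta>) \<le> 2 * L * M"
proof -
  interpret prob_space \<pi> by fact
  have close: "AE z in \<pi>. norm (f \<theta> \<xi> - f \<theta> (probe G0 z)) \<le> 2 * L * M"
    using bounded
  proof eventually_elim
    case (elim z)
    have "norm (f \<theta> \<xi> - f \<theta> (probe G0 z)) \<le> L * norm (\<xi> - probe G0 z)"
      by (rule f_lip)
    also have "\<dots> \<le> L * (2 * M)"
      using norm_triangle_ineq4[of \<xi> "probe G0 z"] elim \<xi> \<open>L \<ge> 0\<close> by (intro mult_left_mono) auto
    finally show ?case by simp
  qed
  have "L-lipschitz_on UNIV (f \<theta>)"
    using f_lip \<open>L \<ge> 0\<close> by (simp add: lipschitz_on_def dist_norm)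
  then have "f \<theta> \<in> borel_measurable borel"
    by (intro borel_measurable_continuous_onI lipschitz_on_continuous_on)
  moreover have "probe G0 \<in> borel_measurable \<pi>"
    using meas measurable_cong_sets[OF sets refl] by blast
  ultimately have "(\<lambda>z. f \<theta> \<xi> - f \<theta> (probe G0 z)) \<in> borel_measurable \<pi>"
    by measurable
  then have int: "integrable \<pi> (\<lambda>z. f \<theta> \<xi> - f \<theta> (probe G0 z))"
    by (rule integrable_const_bound[OF close])
  have "integrable \<pi> (\<lambda>z. f \<theta> (probe G0 z))"
    using Bochner_Integration.integrable_diff[OF integrable_const[of "f \<theta> \<xi>"] int] by simp
  then have "f \<theta> \<xi> - mean_field \<pi> G0 f \<theta> = (\<integral>z. f \<theta> \<xi> - f \<theta> (probe G0 z) \<partial>\<pi>)"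
    by (simp add: mean_field_def prob_space Bochner_Integration.integral_diff)
  also have "norm \<dots> \<le> (\<integral>z. norm (f \<theta> \<xi> - f \<theta> (probe G0 z)) \<partial>\<pi>)"
    by (rule integral_norm_bound)
  also have "\<dots> \<le> (\<integral>z. 2 * L * M \<partial>\<pi>)"
    using int close by (intro integral_mono_AE) auto
  also have "\<dots> = 2 * L * M"
    by (simp add: prob_space)
  finally show ?thesis .
qed

lemma qsa_field_near_mean_field:
  fixes G0 :: "real^'k::finite \<Rightarrow> real^'m::finite" and f :: "real^'d::finite \<Rightarrow> real^'m \<Rightarrow> real^'d"
  assumes "\<forall>x. real_analytic_at G0 x" and "uniform_prob \<omega> \<phi> \<pi>"
    and f_lip: "\<And>\<theta> \<xi> \<xi>'. norm (f \<theta> \<xi>' - f \<theta> \<xi>) \<le> L * norm (\<xi>' - \<xi>)" and "L \<ge> 0"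
  obtains C where "C \<ge> 0"
    "\<And>z0 t \<theta>. z0 \<in> clock_Omega \<omega> \<phi> \<Longrightarrow>
       norm (f \<theta> (probe G0 (clock_from \<omega> z0 t)) - mean_field \<pi> G0 f \<theta>) \<le> C"
proof -
  have cont: "\<And>x. isCont G0 x"
    using assms(1) real_analytic_at_imp_isCont by blast
  obtain M where M: "M \<ge> 0" "\<And>z. \<forall>i. norm (z$i) = 1 \<Longrightarrow> norm (probe G0 z) \<le> M"
    using probe_bounded_on_torus[OF cont] by blast
  have "prob_space \<pi>" and sets: "sets \<pi> = sets borel" and "emeasure \<pi> (clock_Omega \<omega> \<phi>) = 1"
    using assms(2) by (auto simp: uniform_prob_def)
  then interpret prob_space \<pi> by simp
  have "AE z in \<pi>. z \<in> clock_Omega \<omega> \<phi>"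
    using \<open>emeasure \<pi> (clock_Omega \<omega> \<phi>) = 1\<close> by (intro AE_prob_1) (simp add: emeasure_eq_measure)
  then have "AE z in \<pi>. norm (probe G0 z) \<le> M"
    by eventually_elim (intro M(2) clock_Omega_subset_torus)
  note close = norm_diff_mean_field_le[OF prob_space_axioms sets probe_measurable[OF cont] this f_lip \<open>L \<ge> 0\<close>]
  show ?thesis
  proof (rule that)
    fix z0 t \<theta>
    assume "z0 \<in> clock_Omega \<omega> \<phi>"
    then have "norm (probe G0 (clock_from \<omega> z0 t)) \<le> M"
      by (intro M(2) allI norm_clock_from_nth clock_Omega_subset_torus)
    then show "norm (f \<theta> (probe G0 (clock_from \<omega> z0 t)) - mean_field \<pi> G0 f \<theta>) \<le> 2 * L * M"
      by (rule close)
  qed (use M \<open>L \<ge> 0\<close> in simp)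
qed


section \<open>Perturbed mean flows\<close>

lemma ex_window_index:
  fixes t P :: real
  assumes "t > 0" and "P > 0"
  obtains k :: nat where "k * P < t" and "t \<le> (real k + 1) * P"
proof -
  define k where "k = nat (\<lceil>t / P\<rceil> - 1)"
  have "\<lceil>t / P\<rceil> \<ge> 1"
    using assms by (simp add: one_le_ceiling)
  then have k: "real k = of_int \<lceil>t / P\<rceil> - 1"
    by (simp add: k_def)
  have "real k < t / P" "t / P \<le> real k + 1"
    using k ceiling_correct[of "t / P"] by linarith+
  then show ?thesis
    using that assms by (simp add: field_simps)
qed

lemma power_le_exp_decay:
  fixes \<rho> P t :: real
  assumes "0 < \<rho>" and "\<rho> < 1" and "P > 0" and "t \<le> (real k + 1) * P"
  shows "\<rho> ^ k \<le> exp (ln \<rho> / P * t) / \<rho>"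
proof -
  have "t / P - 1 \<le> k"
    using assms(3,4) by (simp add: field_simps)
  then have "k * ln \<rho> \<le> (t / P - 1) * ln \<rho>"
    using assms(1,2) by (intro mult_right_mono_neg) auto
  moreover have "\<rho> ^ k = exp (k * ln \<rho>)"
    using assms(1) by (simp add: exp_of_nat_mult)
  ultimately have "\<rho> ^ k \<le> exp ((t / P - 1) * ln \<rho>)"
    by simp
  also have "\<dots> = exp (ln \<rho> / P * t) / \<rho>"
    using assms(1) by (simp add: algebra_simps exp_diff)
  finally show ?thesis .
qed

locale perturbed_mean_flow =
  fixes Fb :: "real^'d::finite \<Rightarrow> real^'d" and L :: real
    and V :: "real^'d \<Rightarrow> real" and LV \<delta>0 \<delta>1 T C :: real
  assumes L: "L > 0" and Fb_lipschitz: "L-lipschitz_on UNIV Fb"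
    and T: "T > 0" and \<delta>1: "\<delta>1 > 0" and C: "C \<ge> 0"
    and V_nonneg: "\<And>\<theta>. V \<theta> \<ge> 0"
    and V_lipschitz: "\<And>\<theta> \<theta>'. \<bar>V \<theta>' - V \<theta>\<bar> \<le> LV * norm (\<theta>' - \<theta>)"
    and V_coercive: "\<And>\<theta>. norm \<theta> \<ge> inverse \<delta>0 \<Longrightarrow> V \<theta> \<ge> norm \<theta>"
    and V_decrease: "\<And>\<theta>s \<tau>. mean_flow_solution Fb \<theta>s \<Longrightarrow> \<tau> \<ge> 0 \<Longrightarrow> norm (\<theta>s \<tau>) > inverse \<delta>1 \<Longrightarrow>
                   V (\<theta>s (\<tau> + T)) - V (\<theta>s \<tau>) \<le> - \<delta>1 * norm (\<theta>s \<tau>)"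
begin

text \<open>The QSA ODE is of this form, with
  \<open>p t = f (\<Theta> t) (probe G0 (clock_from \<omega> z0 t)) - mean_field \<pi> G0 f (\<Theta> t)\<close>.\<close>

definition perturbed_solution :: "real \<Rightarrow> (real \<Rightarrow> real^'d) \<Rightarrow> bool" where
  "perturbed_solution \<alpha> \<Theta> \<longleftrightarrow> (\<exists>p. (\<forall>t\<ge>0. norm (p t) \<le> C) \<and>
     (\<forall>t\<ge>0. (\<Theta> has_vector_derivative \<alpha> *\<^sub>R (Fb (\<Theta> t) + p t)) (at t within {0..})))"

lemma perturbed_solutionI:
  assumes "\<And>t. t \<ge> 0 \<Longrightarrow> (\<Theta> has_vector_derivative \<alpha> *\<^sub>R h t (\<Theta> t)) (at t within {0..})"
    and "\<And>t \<theta>. t \<ge> 0 \<Longrightarrow> norm (h t \<theta> - Fb \<theta>) \<le> C"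
  shows "perturbed_solution \<alpha> \<Theta>"
  unfolding perturbed_solution_def
  by (rule exI[of _ "\<lambda>t. h t (\<Theta> t) - Fb (\<Theta> t)"]) (simp add: assms)

lemma perturbed_solution_shift:
  assumes "perturbed_solution \<alpha> \<Theta>" and "u \<ge> 0"
  shows "perturbed_solution \<alpha> (\<lambda>t. \<Theta> (u + t))"
proof -
  obtain p where p: "\<And>t. t \<ge> 0 \<Longrightarrow> norm (p t) \<le> C"
    and d: "\<And>t. t \<ge> 0 \<Longrightarrow> (\<Theta> has_vector_derivative \<alpha> *\<^sub>R (Fb (\<Theta> t) + p t)) (at t within {0..})"
    using assms(1) unfolding perturbed_solution_def by blast
  have "((\<lambda>t. \<Theta> (u + t)) has_vector_derivative \<alpha> *\<^sub>R (Fb (\<Theta> (u + t)) + p (u + t))) (at t within {0..})"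
    if "t \<ge> 0" for t
  proof -
    have "((+) u) ` {0..} \<subseteq> {0..}" using assms(2) by auto
    with d[of "u + t"] have "(\<Theta> has_vector_derivative \<alpha> *\<^sub>R (Fb (\<Theta> (u + t)) + p (u + t)))
        (at (u + t) within (+) u ` {0..})"
      using that assms(2) by (auto intro: has_vector_derivative_within_subset)
    moreover have "((+) u has_vector_derivative 1) (at t within {0..})"
      by (auto intro!: derivative_eq_intros)
    ultimately show ?thesis
      using vector_diff_chain_within by (fastforce simp: o_def)
  qed
  then show ?thesis
    unfolding perturbed_solution_def using p assms(2)
    by (intro exI[of _ "\<lambda>t. p (u + t)"]) auto
qed

lemma LV_nonneg: "LV \<ge> 0"
proof -
  have "\<bar>V (axis undefined 1) - V 0\<bar> \<le> LV * norm (axis (undefined::'d) (1::real) - 0)"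
    by (rule V_lipschitz)
  then show ?thesis by simp
qed

lemma perturbed_solution_derivative:
  assumes "perturbed_solution \<alpha> \<Theta>"
  obtains p where "\<And>t. t \<ge> 0 \<Longrightarrow> norm (p t) \<le> C"
    "\<And>t S. t \<in> {0..S} \<Longrightarrow> (\<Theta> has_vector_derivative \<alpha> *\<^sub>R (Fb (\<Theta> t) + p t)) (at t within {0..S})"
proof -
  obtain p where "\<forall>t\<ge>0. norm (p t) \<le> C"
    and d: "\<forall>t\<ge>0. (\<Theta> has_vector_derivative \<alpha> *\<^sub>R (Fb (\<Theta> t) + p t)) (at t within {0..})"
    using assms unfolding perturbed_solution_def by blast
  moreover have "(\<Theta> has_vector_derivative \<alpha> *\<^sub>R (Fb (\<Theta> t) + p t)) (at t within {0..S})"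
    if "t \<in> {0..S}" for t S
    using d that by (auto intro: has_vector_derivative_within_subset)
  ultimately show ?thesis using that by blast
qed

lemma perturbed_solution_continuous:
  assumes "perturbed_solution \<alpha> \<Theta>"
  shows "continuous_on {0..} \<Theta>"
  using assms unfolding perturbed_solution_def continuous_on_eq_continuous_within
  by (meson atLeast_iff has_vector_derivative_continuous)

definition window_growth :: "real \<Rightarrow> real" where
  "window_growth r = (r + 1 + (norm (Fb 0) + C + 1) / L) * exp (L * T)"

definition tracking_error :: real where
  "tracking_error = (1 + (C + 1) / L) * exp (L * T)"

lemma norm_le_window_growth:
  assumes "perturbed_solution \<alpha> \<Theta>" and "\<alpha> > 0" and s: "s \<in> {0..T/\<alpha>}"
  shows "norm (\<Theta> s) \<le> window_growth (norm (\<Theta> 0))"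
proof -
  obtain p where p: "\<And>t. t \<ge> 0 \<Longrightarrow> norm (p t) \<le> C"
    and d: "\<And>t. t \<in> {0..T/\<alpha>} \<Longrightarrow> (\<Theta> has_vector_derivative \<alpha> *\<^sub>R (Fb (\<Theta> t) + p t)) (at t within {0..T/\<alpha>})"
    using perturbed_solution_derivative[OF assms(1)] by metis
  have "norm (\<alpha> *\<^sub>R (Fb (\<Theta> t) + p t)) \<le> \<alpha> * (norm (Fb 0) + C + L * norm (\<Theta> t))"
    if "t \<in> {0..T/\<alpha>}" for t
  proof -
    have "norm (Fb (\<Theta> t)) \<le> norm (Fb 0) + L * norm (\<Theta> t)"
      using lipschitz_on_normD[OF Fb_lipschitz, of "\<Theta> t" 0] norm_triangle_ineq2[of "Fb (\<Theta> t)" "Fb 0"]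
      by simp
    then show ?thesis
      using p[of t] that \<open>\<alpha> > 0\<close> norm_triangle_ineq[of "Fb (\<Theta> t)" "p t"] by (simp add: mult_left_mono)
  qed
  then have "norm (\<Theta> s) \<le> (norm (\<Theta> 0) + 1 + (norm (Fb 0) + C + 1) / L) * exp (\<alpha> * L * s)"
    using C L \<open>\<alpha> > 0\<close> by (intro norm_le_exp_of_linear_growth[OF d _ L _ _ s]) (auto simp: add.assoc)
  also have "\<dots> \<le> window_growth (norm (\<Theta> 0))"
  proof -
    have "\<alpha> * L * s \<le> L * T"
      using s \<open>\<alpha> > 0\<close> L by (simp add: field_simps)
    then show ?thesis
      unfolding window_growth_def using C L by (intro mult_left_mono) auto
  qed
  finally show ?thesis .
qed

lemma mean_flow_tracking:
  assumes "perturbed_solution \<alpha> \<Theta>" and "\<alpha> > 0" and s: "s \<in> {0..T/\<alpha>}"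
  shows "norm (\<Theta> s - picard_limit Fb (\<Theta> 0) (\<alpha> * s)) \<le> tracking_error"
proof -
  let ?mean = "picard_limit Fb (\<Theta> 0)" and ?S = "T/\<alpha>"
  obtain p where p: "\<And>t. t \<ge> 0 \<Longrightarrow> norm (p t) \<le> C"
    and d: "\<And>t. t \<in> {0..?S} \<Longrightarrow> (\<Theta> has_vector_derivative \<alpha> *\<^sub>R (Fb (\<Theta> t) + p t)) (at t within {0..?S})"
    using perturbed_solution_derivative[OF assms(1)] by metis
  have d_mean: "((\<lambda>t. ?mean (\<alpha> * t)) has_vector_derivative \<alpha> *\<^sub>R Fb (?mean (\<alpha> * t))) (at t within {0..?S})"
    if "t \<in> {0..?S}" for t
    by (rule has_vector_derivative_within_subset[OF has_vector_derivative_picard_limit_rescaled[OF Fb_lipschitz \<open>\<alpha> > 0\<close>]])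
      (use that in auto)
  have "norm (\<alpha> *\<^sub>R (Fb (\<Theta> t) + p t) - \<alpha> *\<^sub>R Fb (?mean (\<alpha> * t)))
      \<le> \<alpha> * (C + L * norm (\<Theta> t - ?mean (\<alpha> * t)))" if "t \<in> {0..?S}" for t
  proof -
    have "norm (Fb (\<Theta> t) + p t - Fb (?mean (\<alpha> * t))) \<le> norm (p t) + norm (Fb (\<Theta> t) - Fb (?mean (\<alpha> * t)))"
      by (metis add.commute add_diff_eq norm_triangle_ineq)
    also have "\<dots> \<le> C + L * norm (\<Theta> t - ?mean (\<alpha> * t))"
      using p[of t] that lipschitz_on_normD[OF Fb_lipschitz] by (intro add_mono) auto
    finally show ?thesis
      using \<open>\<alpha> > 0\<close> by (simp add: scaleR_diff_right[symmetric] mult_left_mono)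
  qed
  then have "norm (\<Theta> s - ?mean (\<alpha> * s))
      \<le> (norm (\<Theta> 0 - ?mean (\<alpha> * 0)) + 1 + (C + 1) / L) * exp (\<alpha> * L * s)"
    using C by (intro norm_le_exp_of_linear_growth[OF has_vector_derivative_diff[OF d d_mean] \<open>\<alpha> > 0\<close> L _ _ s])
  also have "\<dots> \<le> tracking_error"
  proof -
    have "\<alpha> * L * s \<le> L * T"
      using s \<open>\<alpha> > 0\<close> L by (simp add: field_simps)
    then show ?thesis
      unfolding tracking_error_def using C L by (simp add: picard_limit_at_0 mult_left_mono)
  qed
  finally show ?thesis .
qed

lemma window_decrease:
  assumes "perturbed_solution \<alpha> \<Theta>" and "\<alpha> > 0" and "norm (\<Theta> 0) > inverse \<delta>1"
  shows "V (\<Theta> (T/\<alpha>)) \<le> V (\<Theta> 0) - \<delta>1 * norm (\<Theta> 0) + LV * tracking_error"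
proof -
  let ?mean = "picard_limit Fb (\<Theta> 0)"
  have "mean_flow_solution Fb ?mean"
    unfolding mean_flow_solution_def using has_vector_derivative_picard_limit[OF Fb_lipschitz] by blast
  then have "V (?mean T) \<le> V (\<Theta> 0) - \<delta>1 * norm (\<Theta> 0)"
    using V_decrease[of ?mean 0] assms(3) by (simp add: picard_limit_at_0)
  moreover have "V (\<Theta> (T/\<alpha>)) - V (?mean T) \<le> LV * norm (\<Theta> (T/\<alpha>) - ?mean T)"
    using V_lipschitz[of "?mean T" "\<Theta> (T/\<alpha>)"] by (simp add: abs_le_iff norm_minus_commute)
  moreover have "norm (\<Theta> (T/\<alpha>) - ?mean T) \<le> tracking_error"
    using mean_flow_tracking[OF assms(1,2), of "T/\<alpha>"] T \<open>\<alpha> > 0\<close> by simp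
  then have "LV * norm (\<Theta> (T/\<alpha>) - ?mean T) \<le> LV * tracking_error"
    using LV_nonneg by (rule mult_left_mono)
  ultimately show ?thesis
    by linarith
qed

definition radius :: real where
  "radius = max 1 (max (inverse \<delta>1) (max (inverse \<delta>0) (max (V 0) (2 * LV * tracking_error / \<delta>1))))"

definition contraction :: real where
  "contraction = max (1/2) (1 - \<delta>1 / (2 * (LV + 1)))"

lemma radius_ge:
  "radius \<ge> 1" "radius \<ge> inverse \<delta>1" "radius \<ge> inverse \<delta>0" "radius \<ge> V 0"
  "radius \<ge> 2 * LV * tracking_error / \<delta>1"
  unfolding radius_def by auto

lemma contraction_bounds: "0 < contraction" "contraction < 1"
  using \<delta>1 LV_nonneg by (auto simp: contraction_def)

lemma V_le_linear:
  assumes "norm \<theta> \<ge> radius"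
  shows "V \<theta> \<le> (LV + 1) * norm \<theta>"
  using V_lipschitz[of 0 \<theta>] radius_ge(4) assms by (simp add: abs_le_iff algebra_simps)

lemma contraction_step:
  assumes "perturbed_solution \<alpha> \<Theta>" and "\<alpha> > 0" and big: "norm (\<Theta> 0) > radius"
  shows "V (\<Theta> (T/\<alpha>)) \<le> contraction * V (\<Theta> 0)"
proof -
  let ?n = "norm (\<Theta> 0)"
  have "V (\<Theta> (T/\<alpha>)) \<le> V (\<Theta> 0) - \<delta>1 * ?n + LV * tracking_error"
    using window_decrease[OF assms(1,2)] big radius_ge(2) by simp
  moreover have "2 * LV * tracking_error \<le> \<delta>1 * radius"
    using radius_ge(5) \<delta>1 by (simp add: field_simps)
  moreover have "\<delta>1 * radius \<le> \<delta>1 * ?n"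
    using big \<delta>1 by simp
  ultimately have "V (\<Theta> (T/\<alpha>)) \<le> V (\<Theta> 0) - \<delta>1 / 2 * ?n"
    by linarith
  also have "\<dots> \<le> V (\<Theta> 0) - \<delta>1 / 2 * (V (\<Theta> 0) / (LV + 1))"
    using V_le_linear[of "\<Theta> 0"] big LV_nonneg \<delta>1 by (intro diff_left_mono mult_left_mono) (auto simp: field_simps)
  also have "\<dots> = (1 - \<delta>1 / (2 * (LV + 1))) * V (\<Theta> 0)"
    using LV_nonneg by (simp add: field_simps)
  also have "\<dots> \<le> contraction * V (\<Theta> 0)"
    unfolding contraction_def by (intro mult_right_mono V_nonneg) auto
  finally show ?thesis .
qed

lemma contraction_iterate:
  assumes "perturbed_solution \<alpha> \<Theta>" and "\<alpha> > 0"
    and "\<forall>j<k. norm (\<Theta> (real j * (T/\<alpha>))) > radius"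
  shows "V (\<Theta> (real k * (T/\<alpha>))) \<le> contraction ^ k * V (\<Theta> 0)"
  using assms(3)
proof (induction k)
  case 0
  then show ?case by simp
next
  case (Suc k)
  define u where "u = k * (T/\<alpha>)"
  have u: "u \<ge> 0" using T \<open>\<alpha> > 0\<close> by (simp add: u_def)
  have "V (\<Theta> (u + T/\<alpha>)) \<le> contraction * V (\<Theta> u)"
    using contraction_step[OF perturbed_solution_shift[OF assms(1) u] \<open>\<alpha> > 0\<close>] Suc.prems
    by (simp add: u_def)
  also have "\<dots> \<le> contraction * (contraction ^ k * V (\<Theta> 0))"
    using Suc contraction_bounds by (intro mult_left_mono) (auto simp: u_def)
  finally show ?case
    by (simp add: u_def algebra_simps)
qed

definition decay_rate :: real where
  "decay_rate = - ln contraction / T"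

definition growth_factor :: real where
  "growth_factor = (2 + (norm (Fb 0) + C + 1) / L) * exp (L * T)"

definition gain :: real where
  "gain = growth_factor * (LV + 1) / contraction"

lemma decay_rate_pos: "decay_rate > 0"
  using contraction_bounds T by (simp add: decay_rate_def divide_neg_pos)

lemma window_growth_le:
  assumes "r \<ge> 1"
  shows "window_growth r \<le> growth_factor * r"
proof -
  have "r + 1 + (norm (Fb 0) + C + 1) / L \<le> (2 + (norm (Fb 0) + C + 1) / L) * r"
    using assms C L mult_left_mono[OF assms, of "(norm (Fb 0) + C + 1) / L"] by (simp add: algebra_simps)
  then show ?thesis
    unfolding window_growth_def growth_factor_def by (simp add: mult.commute mult.left_commute)
qed

lemma growth_factor_ge_1: "growth_factor \<ge> 1"
  unfolding growth_factor_def using C L T by (intro mult_ge1_I) auto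

lemma gain_ge_1: "gain \<ge> 1"
proof -
  have "1 \<le> growth_factor * (LV + 1)"
    using growth_factor_ge_1 LV_nonneg by (intro mult_ge1_I) auto
  also have "\<dots> \<le> gain"
    unfolding gain_def using contraction_bounds calculation
    by (simp add: le_divide_eq mult_left_le)
  finally show ?thesis .
qed

lemma norm_le_after_windows:
  assumes "perturbed_solution \<alpha> \<Theta>" and "\<alpha> > 0"
    and big: "\<forall>s\<in>{0..<t}. norm (\<Theta> s) > radius"
    and k: "k * (T/\<alpha>) < t" "t \<le> (real k + 1) * (T/\<alpha>)"
  shows "norm (\<Theta> t) \<le> growth_factor * (contraction ^ k * ((LV + 1) * norm (\<Theta> 0)))"
proof -
  define u where "u = k * (T/\<alpha>)"
  have u: "0 \<le> u" "u < t"
    using k T \<open>\<alpha> > 0\<close> by (simp_all add: u_def)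
  then have big_u: "norm (\<Theta> u) > radius"
    using big by simp
  have "\<forall>j<k. norm (\<Theta> (real j * (T/\<alpha>))) > radius"
  proof (intro allI impI)
    fix j assume "j < k"
    then have "real j * (T/\<alpha>) \<le> u"
      unfolding u_def using T \<open>\<alpha> > 0\<close> by (intro mult_right_mono) auto
    then show "norm (\<Theta> (real j * (T/\<alpha>))) > radius"
      using big u T \<open>\<alpha> > 0\<close> by simp
  qed
  then have "V (\<Theta> u) \<le> contraction ^ k * V (\<Theta> 0)"
    using contraction_iterate[OF assms(1,2)] by (simp add: u_def)
  also have "\<dots> \<le> contraction ^ k * ((LV + 1) * norm (\<Theta> 0))"
    using big u contraction_bounds by (intro mult_left_mono V_le_linear less_imp_le) simp_all
  finally have V_u: "V (\<Theta> u) \<le> contraction ^ k * ((LV + 1) * norm (\<Theta> 0))" .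
  have "norm (\<Theta> t) \<le> window_growth (norm (\<Theta> u))"
    using norm_le_window_growth[OF perturbed_solution_shift[OF assms(1) u(1)] \<open>\<alpha> > 0\<close>, of "t - u"] u k
    by (simp add: u_def algebra_simps)
  also have "\<dots> \<le> growth_factor * norm (\<Theta> u)"
    using big_u radius_ge(1) by (intro window_growth_le) simp
  also have "\<dots> \<le> growth_factor * V (\<Theta> u)"
    using big_u radius_ge(3) growth_factor_ge_1 by (intro mult_left_mono V_coercive) simp_all
  also have "\<dots> \<le> growth_factor * (contraction ^ k * ((LV + 1) * norm (\<Theta> 0)))"
    using V_u growth_factor_ge_1 by (intro mult_left_mono) simp_all
  finally show ?thesis .
qed

lemma exponential_decay:
  assumes "perturbed_solution \<alpha> \<Theta>" and "\<alpha> > 0" and "t \<ge> 0"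
    and big: "\<forall>s\<in>{0..<t}. norm (\<Theta> s) > radius"
  shows "norm (\<Theta> t) \<le> gain * norm (\<Theta> 0) * exp (- \<alpha> * decay_rate * t)"
proof (cases "t = 0")
  case True
  then show ?thesis using gain_ge_1 by (simp add: mult_le_cancel_right1)
next
  case False
  then have "t > 0" using \<open>t \<ge> 0\<close> by simp
  moreover have "T / \<alpha> > 0" using T \<open>\<alpha> > 0\<close> by simp
  ultimately obtain k :: nat where k: "k * (T/\<alpha>) < t" "t \<le> (real k + 1) * (T/\<alpha>)"
    by (rule ex_window_index)
  have "contraction ^ k \<le> exp (ln contraction / (T/\<alpha>) * t) / contraction"
    using contraction_bounds \<open>T / \<alpha> > 0\<close> k(2) by (intro power_le_exp_decay) auto
  also have "ln contraction / (T/\<alpha>) * t = - \<alpha> * decay_rate * t"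
    by (simp add: decay_rate_def)
  finally have decay: "contraction ^ k \<le> exp (- \<alpha> * decay_rate * t) / contraction" .
  have "norm (\<Theta> t) \<le> growth_factor * (contraction ^ k * ((LV + 1) * norm (\<Theta> 0)))"
    by (rule norm_le_after_windows[OF assms(1,2) big k])
  also have "\<dots> \<le> growth_factor * (exp (- \<alpha> * decay_rate * t) / contraction * ((LV + 1) * norm (\<Theta> 0)))"
    using decay growth_factor_ge_1 LV_nonneg by (intro mult_left_mono mult_right_mono) auto
  also have "\<dots> = gain * norm (\<Theta> 0) * exp (- \<alpha> * decay_rate * t)"
    by (simp add: gain_def)
  finally show ?thesis .
qed

lemma reaches_radius:
  assumes "perturbed_solution \<alpha> \<Theta>" and "\<alpha> > 0"
  shows "\<exists>t\<ge>0. norm (\<Theta> t) \<le> radius"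
proof (rule ccontr)
  assume "\<not> ?thesis"
  then have big: "\<forall>t\<ge>0. norm (\<Theta> t) > radius" by (meson not_le)
  define c where "c = \<alpha> * decay_rate"
  define M where "M = gain * norm (\<Theta> 0)"
  have c: "c > 0" and M: "M \<ge> 0" and R: "radius > 0"
    using \<open>\<alpha> > 0\<close> decay_rate_pos gain_ge_1 radius_ge(1) by (simp_all add: c_def M_def)
  define t where "t = M / (radius * c) + 1"
  have t: "t > 0"
    using M R c by (simp add: t_def add_nonneg_pos)
  have "M < radius * exp (c * t)"
  proof -
    have "c * t = M / radius + c" using c R by (simp add: t_def field_simps)
    then have "M / radius < exp (c * t)"
      using exp_ge_add_one_self[of "c * t"] c by linarith
    then show ?thesis using R by (simp add: field_simps)
  qed
  then have "M * exp (- c * t) < radius"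
    by (simp add: exp_minus field_simps)
  moreover have "norm (\<Theta> t) \<le> M * exp (- c * t)"
    using exponential_decay[OF assms, of t] big t by (simp add: M_def c_def mult.assoc)
  moreover have "radius < norm (\<Theta> t)"
    using big t by simp
  ultimately show False
    by linarith
qed

definition ultimate_bound :: real where
  "ultimate_bound = max radius (gain * window_growth radius)"

lemma bounded_after_radius:
  assumes sol: "perturbed_solution \<alpha> \<Theta>" and "\<alpha> > 0" and start: "norm (\<Theta> 0) \<le> radius" and "t \<ge> 0"
  shows "norm (\<Theta> t) \<le> ultimate_bound"
proof -
  have "continuous_on {0..t} (\<lambda>u. norm (\<Theta> u))"
    using perturbed_solution_continuous[OF sol]
    by (intro continuous_intros) (rule continuous_on_subset, auto)
  then obtain s where s: "s \<in> {0..t}" "norm (\<Theta> s) \<le> radius"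
    and after: "\<And>u. s < u \<Longrightarrow> u \<le> t \<Longrightarrow> norm (\<Theta> u) > radius"
    using last_visit start \<open>t \<ge> 0\<close> by blast
  show ?thesis
  proof (cases "s = t")
    case True
    then show ?thesis using s by (simp add: ultimate_bound_def le_max_iff_disj)
  next
    case False
    define m where "m = min (T/\<alpha>) (t - s)"
    have m: "0 < m" "m \<le> t - s" "m \<le> T/\<alpha>"
      using s False T \<open>\<alpha> > 0\<close> by (auto simp: m_def)
    \<comment> \<open>\<open>u0\<close> is after the last visit \<open>s\<close> to the ball, but within one window of it.\<close>
    define u0 where "u0 = s + m / 2"
    have u0: "s < u0" "u0 < t" "u0 - s \<le> T/\<alpha>"
      using m unfolding u0_def by linarith+
    have "norm (\<Theta> u0) \<le> window_growth (norm (\<Theta> s))"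
      using norm_le_window_growth[OF perturbed_solution_shift[OF sol] \<open>\<alpha> > 0\<close>, of s "u0 - s"] s u0
      by simp
    also have "\<dots> \<le> window_growth radius"
      using s by (simp add: window_growth_def)
    finally have u0_bound: "norm (\<Theta> u0) \<le> window_growth radius" .
    have "norm (\<Theta> t) \<le> gain * norm (\<Theta> u0) * exp (- \<alpha> * decay_rate * (t - u0))"
      using exponential_decay[OF perturbed_solution_shift[OF sol] \<open>\<alpha> > 0\<close>, of u0 "t - u0"] u0 s after
      by simp
    also have "\<dots> \<le> gain * norm (\<Theta> u0)"
      using u0 \<open>\<alpha> > 0\<close> decay_rate_pos gain_ge_1 by (intro mult_left_le) (auto simp: mult_nonneg_nonneg)
    also have "\<dots> \<le> ultimate_bound"
      using u0_bound gain_ge_1 by (simp add: ultimate_bound_def mult_left_mono le_max_iff_disj)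
    finally show ?thesis .
  qed
qed

lemma eventually_bounded:
  assumes "perturbed_solution \<alpha> \<Theta>" and "\<alpha> > 0"
  shows "\<exists>t0. \<forall>t\<ge>t0. norm (\<Theta> t) \<le> ultimate_bound"
proof -
  obtain t1 where t1: "t1 \<ge> 0" "norm (\<Theta> t1) \<le> radius"
    using reaches_radius[OF assms] by blast
  have "norm (\<Theta> t) \<le> ultimate_bound" if "t \<ge> t1" for t
    using bounded_after_radius[OF perturbed_solution_shift[OF assms(1) t1(1)] assms(2), of "t - t1"] t1 that
    by simp
  then show ?thesis by blast
qed

theorem exponential_stability:
  "\<exists>b>0. \<exists>\<delta>>0. \<forall>\<alpha>>0. \<forall>\<Theta>. perturbed_solution \<alpha> \<Theta> \<longrightarrow>
     (\<forall>t\<ge>0. (\<forall>s\<in>{0..<t}. norm (\<Theta> s) > inverse \<delta>) \<longrightarrow>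
        norm (\<Theta> t) \<le> b * norm (\<Theta> 0) * exp (- \<alpha> * \<delta> * t))"
proof -
  define \<delta> where "\<delta> = min (inverse radius) decay_rate"
  have \<delta>: "\<delta> > 0" "\<delta> \<le> decay_rate"
    using radius_ge(1) decay_rate_pos by (auto simp: \<delta>_def)
  have "radius \<le> inverse \<delta>"
    using le_imp_inverse_le[of \<delta> "inverse radius"] \<delta> by (simp add: \<delta>_def)
  have "norm (\<Theta> t) \<le> gain * norm (\<Theta> 0) * exp (- \<alpha> * \<delta> * t)"
    if "\<alpha> > 0" "perturbed_solution \<alpha> \<Theta>" "t \<ge> 0" "\<forall>s\<in>{0..<t}. norm (\<Theta> s) > inverse \<delta>"
    for \<alpha> \<Theta> t
  proof -
    have "norm (\<Theta> t) \<le> gain * norm (\<Theta> 0) * exp (- \<alpha> * decay_rate * t)"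
      using that \<open>radius \<le> inverse \<delta>\<close> by (intro exponential_decay) force+
    also have "\<dots> \<le> gain * norm (\<Theta> 0) * exp (- \<alpha> * \<delta> * t)"
      using that \<delta> gain_ge_1 by (intro mult_left_mono) (auto intro: mult_right_mono)
    finally show ?thesis .
  qed
  then show ?thesis
    using gain_ge_1 \<delta>(1) by (intro exI[of _ gain] exI[of _ \<delta>]) auto
qed

theorem ultimate_boundedness:
  "\<exists>B. \<forall>\<alpha>>0. \<forall>\<Theta>. perturbed_solution \<alpha> \<Theta> \<longrightarrow> (\<exists>t0. \<forall>t\<ge>t0. norm (\<Theta> t) \<le> B)"
  using eventually_bounded by blast

end

section \<open>Stability of the QSA ODE\<close>

lemma positive_lipschitz_constant:
  fixes F :: "'a::real_normed_vector \<Rightarrow> 'b::real_normed_vector"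
    and f :: "'a \<Rightarrow> 'c::real_normed_vector \<Rightarrow> 'b"
  assumes "\<exists>L\<^sub>f. (\<forall>\<theta> \<theta>'. norm (F \<theta>' - F \<theta>) \<le> L\<^sub>f * norm (\<theta>' - \<theta>))
              \<and> (\<forall>\<theta> \<theta>' \<xi> \<xi>'. norm (f \<theta>' \<xi> - f \<theta> \<xi>) + norm (f \<theta> \<xi>' - f \<theta> \<xi>)
                                \<le> L\<^sub>f * (norm (\<theta>' - \<theta>) + norm (\<xi>' - \<xi>)))"
  obtains L where "L > 0" "L-lipschitz_on UNIV F"
    "\<And>\<theta> \<xi> \<xi>'. norm (f \<theta> \<xi>' - f \<theta> \<xi>) \<le> L * norm (\<xi>' - \<xi>)"
proof -
  obtain Lf where F_lip: "\<And>\<theta> \<theta>'. norm (F \<theta>' - F \<theta>) \<le> Lf * norm (\<theta>' - \<theta>)"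
    and f_lip: "\<And>\<theta> \<xi> \<xi>'. norm (f \<theta> \<xi>' - f \<theta> \<xi>) \<le> Lf * norm (\<xi>' - \<xi>)"
    using assms by (metis add_0 diff_self norm_zero)
  have Lf_le: "Lf * r \<le> (\<bar>Lf\<bar> + 1) * r" if "r \<ge> 0" for r
    using that by (intro mult_right_mono) auto
  show ?thesis
  proof (rule that)
    show "\<bar>Lf\<bar> + 1 > 0" by simp
    have "norm (F x - F y) \<le> (\<bar>Lf\<bar> + 1) * norm (x - y)" for x y
      using F_lip[of x y] Lf_le[of "norm (x - y)"] by simp
    then show "(\<bar>Lf\<bar> + 1)-lipschitz_on UNIV F"
      by (simp add: lipschitz_on_def dist_norm)
    show "norm (f \<theta> \<xi>' - f \<theta> \<xi>) \<le> (\<bar>Lf\<bar> + 1) * norm (\<xi>' - \<xi>)" for \<theta> \<xi> \<xi>'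
      using f_lip[of \<theta> \<xi>' \<xi>] Lf_le[of "norm (\<xi>' - \<xi>)"] by simp
  qed
qed

theorem theorem2p7:
  fixes \<omega> \<phi> :: "real^'k"
    and G0 :: "real^'k \<Rightarrow> real^'m"
    and f :: "real^'d \<Rightarrow> real^'m \<Rightarrow> real^'d"
    and \<pi> :: "(complex^'k) measure"
  assumes freq_pos: "\<forall>i. \<omega>$i > 0"
    and G0_analytic: "\<forall>x. real_analytic_at G0 x"
    and G0_taylor: "taylor_abs_summable G0"
    and f_cont: "continuous_on UNIV (\<lambda>p. f (fst p) (snd p))"
    and pi_uniform: "uniform_prob \<omega> \<phi> \<pi>"
    and A1: "\<exists>L\<^sub>f. (\<forall>\<theta> \<theta>'. norm (mean_field \<pi> G0 f \<theta>' - mean_field \<pi> G0 f \<theta>) \<le> L\<^sub>f * norm (\<theta>' - \<theta>))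
              \<and> (\<forall>\<theta> \<theta>' \<xi> \<xi>'. norm (f \<theta>' \<xi> - f \<theta> \<xi>) + norm (f \<theta> \<xi>' - f \<theta> \<xi>)
                                \<le> L\<^sub>f * (norm (\<theta>' - \<theta>) + norm (\<xi>' - \<xi>)))"
    and V4': "\<exists>(V :: real^'d \<Rightarrow> real) L\<^sub>V \<delta>\<^sub>0 \<delta>\<^sub>1 T. \<delta>\<^sub>0 > 0 \<and> \<delta>\<^sub>1 > 0 \<and> T > 0
              \<and> (\<forall>\<theta>. V \<theta> \<ge> 0)
              \<and> (\<forall>\<theta> \<theta>'. \<bar>V \<theta>' - V \<theta>\<bar> \<le> L\<^sub>V * norm (\<theta>' - \<theta>))
              \<and> (\<forall>\<theta>. norm \<theta> \<ge> inverse \<delta>\<^sub>0 \<longrightarrow> V \<theta> \<ge> norm \<theta>)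
              \<and> (\<forall>\<theta>s. mean_flow_solution (mean_field \<pi> G0 f) \<theta>s \<longrightarrow>
                   (\<forall>\<tau>\<ge>0. norm (\<theta>s \<tau>) > inverse \<delta>\<^sub>1 \<longrightarrow>
                      V (\<theta>s (\<tau> + T)) - V (\<theta>s \<tau>) \<le> - \<delta>\<^sub>1 * norm (\<theta>s \<tau>)))"
  shows "\<exists>\<alpha>\<^sub>0 > 0.
           (\<exists>b > 0. \<exists>\<delta> > 0. \<forall>\<alpha> \<in> {0<..\<alpha>\<^sub>0}. \<forall>\<Theta>0. \<forall>z0 \<in> clock_Omega \<omega> \<phi>. \<forall>\<Theta>.
              qsa_solution \<omega> G0 f \<alpha> \<Theta>0 z0 \<Theta> \<longrightarrow>
              (\<forall>t\<ge>0. (\<forall>s\<in>{0..<t}. norm (\<Theta> s) > inverse \<delta>) \<longrightarrow>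
                 norm (\<Theta> t) \<le> b * norm \<Theta>0 * exp (- \<alpha> * \<delta> * t)))
         \<and> (\<exists>B. \<forall>\<alpha> \<in> {0<..\<alpha>\<^sub>0}. \<forall>\<Theta>0. \<forall>z0 \<in> clock_Omega \<omega> \<phi>. \<forall>\<Theta>.
              qsa_solution \<omega> G0 f \<alpha> \<Theta>0 z0 \<Theta> \<longrightarrow>
              (\<exists>t0. \<forall>t\<ge>t0. norm (\<Theta> t) \<le> B))"
proof -
  let ?Fb = "mean_field \<pi> G0 f"
  obtain L where L: "L > 0" and "L-lipschitz_on UNIV ?Fb"
    and "\<And>\<theta> \<xi> \<xi>'. norm (f \<theta> \<xi>' - f \<theta> \<xi>) \<le> L * norm (\<xi>' - \<xi>)"
    using positive_lipschitz_constant[OF A1] by blast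
  then obtain C where "C \<ge> 0" and near: "\<And>z0 t \<theta>. z0 \<in> clock_Omega \<omega> \<phi> \<Longrightarrow>
      norm (f \<theta> (probe G0 (clock_from \<omega> z0 t)) - ?Fb \<theta>) \<le> C"
    using qsa_field_near_mean_field[OF G0_analytic pi_uniform] L by (meson less_imp_le)
  from V4' obtain V LV \<delta>0 \<delta>1 T where "\<delta>1 > 0" "T > 0" "\<And>\<theta>. V \<theta> \<ge> 0"
    "\<And>\<theta> \<theta>'. \<bar>V \<theta>' - V \<theta>\<bar> \<le> LV * norm (\<theta>' - \<theta>)"
    "\<And>\<theta>. norm \<theta> \<ge> inverse \<delta>0 \<Longrightarrow> V \<theta> \<ge> norm \<theta>"
    "\<And>\<theta>s \<tau>. mean_flow_solution ?Fb \<theta>s \<Longrightarrow> \<tau> \<ge> 0 \<Longrightarrow> norm (\<theta>s \<tau>) > inverse \<delta>1 \<Longrightarrow>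
       V (\<theta>s (\<tau> + T)) - V (\<theta>s \<tau>) \<le> - \<delta>1 * norm (\<theta>s \<tau>)"
    by blast
  interpret perturbed_mean_flow ?Fb L V LV \<delta>0 \<delta>1 T C
    by unfold_locales fact+
  have qsa: "perturbed_solution \<alpha> \<Theta> \<and> \<Theta> 0 = \<Theta>0"
    if "qsa_solution \<omega> G0 f \<alpha> \<Theta>0 z0 \<Theta>" "z0 \<in> clock_Omega \<omega> \<phi>" for \<alpha> \<Theta>0 z0 \<Theta>
    using that near unfolding qsa_solution_def
    by (auto intro: perturbed_solutionI[where h = "\<lambda>t \<theta>. f \<theta> (probe G0 (clock_from \<omega> z0 t))"])
  show ?thesis
    by (rule exI[of _ "1::real"], intro conjI; use qsa exponential_stability ultimate_boundedness in
        \<open>metis greaterThanAtMost_iff zero_less_one\<close>)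
qed

end
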